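(* Let $\mathcal{P}$ be a program and $G$ a goal of Prolog$^{\oplus,\&}$, as defined in the context. Then $\mathrm{exec}(\mathcal{P},G)$ holds (execution of $\langle \mathcal{P}, G\rangle$ terminates with a success) if and only if $G$ is provable from $!\mathcal{P}$ in Lolli, that is, in intuitionistic linear logic: the sequent $!\mathcal{P} \vdash G$ is derivable.
   Context: Prolog$^{\oplus,\&}$ is a first-order language whose goal formulas $G$ and clauses $D$ are given by $G ::= A \mid G\otimes G \mid \exists x\, G \mid G \& G \mid G \oplus G$ and $D ::= A \mid G \supset A \mid \forall x\, D$, where $A$ ranges over atomic formulas. A program $\mathcal{P}$ is a set of clauses. Inside linear logic (Lolli), $\otimes$ is multiplicative conjunction, $\&$ additive conjunction, and $\oplus$ additive disjunction. The symbol $\supset$ is Lolli's intuitionistic implication, i.e. $G \supset A$ stands for $!G \multimap A$. Finally, $!\mathcal{P}$ denotes $\{!D : D\in\mathcal{P}\}$, so every clause is treated as a reusable resource. Notation: $D;\mathcal{P}$ denotes $\{D\}\cup\mathcal{P}$ with $D$ marked as the distinguished clause used for backchaining. $[t/x]$ denotes substitution of a term $t$ for $x$. The standard relation $\mathrm{prov}$ is defined inductively by: (1) $\mathrm{prov}(A;\mathcal{P},A)$; (2) $\mathrm{prov}((G_1\supset A);\mathcal{P},A)$ if $\mathrm{prov}(\mathcal{P},G_1)$; (3) $\mathrm{prov}(\forall x D;\mathcal{P},A)$ if $\mathrm{prov}([t/x]D;\mathcal{P},A)$ for some term $t$; (4) $\mathrm{prov}(\mathcal{P},A)$ if $D\in\mathcal{P}$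 and $\mathrm{prov}(D;\mathcal{P},A)$; (5) $\mathrm{prov}(\mathcal{P},G_1\otimes G_2)$ if $\mathrm{prov}(\mathcal{P},G_1)$ and $\mathrm{prov}(\mathcal{P},G_2)$; (6) $\mathrm{prov}(\mathcal{P},G_1\& G_2)$ if $\mathrm{prov}(\mathcal{P},G_1)$ and $\mathrm{prov}(\mathcal{P},G_2)$; (7) $\mathrm{prov}(\mathcal{P},G_1\oplus G_2)$ if $\mathrm{prov}(\mathcal{P},G_1)$ or $\mathrm{prov}(\mathcal{P},G_2)$; (8) $\mathrm{prov}(\mathcal{P},\exists x G_1)$ if $\mathrm{prov}(\mathcal{P},[t/x]G_1)$ for some term $t$. The new interactive execution relation $\mathrm{exec}$ is defined by the same clauses (1)–(5) and (8), with $\mathrm{exec}$ in place of $\mathrm{prov}$, together with two further rules: (a) $\mathrm{exec}(\mathcal{P},G_0\& G_1)$ if $\mathrm{exec}(\mathcal{P},G_i)$ and $\mathrm{prov}(\mathcal{P},G_{(i+1)\bmod 2})$, where the index $i\in\{0,1\}$ is chosen by the user. The result is claimed whatever choices the user makes. (b) $\mathrm{exec}(\mathcal{P},G_0\oplus G_1)$ if $\mathrm{exec}(\mathcal{P},G_i)$ for some $i\in\{0,1\}$ chosen by the machine. *)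

theory Defs
  imports Main "HOL-Library.Multiset"
begin

text \<open>Terms: free variables (Var), bound variables as de Bruijn indices (Bnd),
  and function applications.\<close>
datatype trm = Var nat | Bnd nat | Fn string "trm list"

text \<open>Formulas of (the relevant fragment of) intuitionistic linear logic / Lolli.
  Intuitionistic implication G \<supset> A is represented, as in Lolli, by (!G) -o A.\<close>
datatype form =
    Atom string "trm list"
  | Tensor form form
  | With form form
  | Plus form form
  | Ex form               (* existential, binds Bnd 0   *)
  | All form              (* universal, binds Bnd 0     *)
  | Lolli form form
  | Bang form

definition IImp :: "form \<Rightarrow> form \<Rightarrow> form" where
  "IImp G A = Lolli (Bang G) A"

fun open_trm :: "nat \<Rightarrow> trm \<Rightarrow> trm \<Rightarrow> trm" where
  "open_trm k t (Var x) = Var x"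
| "open_trm k t (Bnd i) = (if i = k then t else Bnd i)"
| "open_trm k t (Fn f ts) = Fn f (map (open_trm k t) ts)"

fun open_form :: "nat \<Rightarrow> trm \<Rightarrow> form \<Rightarrow> form" where
  "open_form k t (Atom p ts) = Atom p (map (open_trm k t) ts)"
| "open_form k t (Tensor A B) = Tensor (open_form k t A) (open_form k t B)"
| "open_form k t (With A B) = With (open_form k t A) (open_form k t B)"
| "open_form k t (Plus A B) = Plus (open_form k t A) (open_form k t B)"
| "open_form k t (Ex A) = Ex (open_form (Suc k) t A)"
| "open_form k t (All A) = All (open_form (Suc k) t A)"
| "open_form k t (Lolli A B) = Lolli (open_form k t A) (open_form k t B)"
| "open_form k t (Bang A) = Bang (open_form k t A)"

text \<open>Instantiation [t/x]B of the body B of a quantifier \<forall>x B / \<exists>x B.\<close>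
definition inst :: "trm \<Rightarrow> form \<Rightarrow> form" where
  "inst t B = open_form 0 t B"

fun lc_trm :: "nat \<Rightarrow> trm \<Rightarrow> bool" where
  "lc_trm k (Var x) = True"
| "lc_trm k (Bnd i) = (i < k)"
| "lc_trm k (Fn f ts) = (\<forall>t\<in>set ts. lc_trm k t)"

fun lc_form :: "nat \<Rightarrow> form \<Rightarrow> bool" where
  "lc_form k (Atom p ts) = (\<forall>t\<in>set ts. lc_trm k t)"
| "lc_form k (Tensor A B) = (lc_form k A \<and> lc_form k B)"
| "lc_form k (With A B) = (lc_form k A \<and> lc_form k B)"
| "lc_form k (Plus A B) = (lc_form k A \<and> lc_form k B)"
| "lc_form k (Ex A) = lc_form (Suc k) A"
| "lc_form k (All A) = lc_form (Suc k) A"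
| "lc_form k (Lolli A B) = (lc_form k A \<and> lc_form k B)"
| "lc_form k (Bang A) = lc_form k A"

abbreviation closed_trm :: "trm \<Rightarrow> bool" where
  "closed_trm t \<equiv> lc_trm 0 t"

fun fv_trm :: "trm \<Rightarrow> nat set" where
  "fv_trm (Var x) = {x}"
| "fv_trm (Bnd i) = {}"
| "fv_trm (Fn f ts) = (\<Union>t\<in>set ts. fv_trm t)"

fun fv_form :: "form \<Rightarrow> nat set" where
  "fv_form (Atom p ts) = (\<Union>t\<in>set ts. fv_trm t)"
| "fv_form (Tensor A B) = fv_form A \<union> fv_form B"
| "fv_form (With A B) = fv_form A \<union> fv_form B"
| "fv_form (Plus A B) = fv_form A \<union> fv_form B"
| "fv_form (Ex A) = fv_form A"
| "fv_form (All A) = fv_form A"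
| "fv_form (Lolli A B) = fv_form A \<union> fv_form B"
| "fv_form (Bang A) = fv_form A"

fun is_goal_raw :: "form \<Rightarrow> bool" where
  "is_goal_raw (Atom p ts) = True"
| "is_goal_raw (Tensor A B) = (is_goal_raw A \<and> is_goal_raw B)"
| "is_goal_raw (With A B) = (is_goal_raw A \<and> is_goal_raw B)"
| "is_goal_raw (Plus A B) = (is_goal_raw A \<and> is_goal_raw B)"
| "is_goal_raw (Ex A) = is_goal_raw A"
| "is_goal_raw (All A) = False"
| "is_goal_raw (Lolli A B) = False"
| "is_goal_raw (Bang A) = False"

fun is_atom :: "form \<Rightarrow> bool" where
  "is_atom (Atom p ts) = True"
| "is_atom _ = False"

fun is_clause_raw :: "form \<Rightarrow> bool" where
  "is_clause_raw (Atom p ts) = True"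
| "is_clause_raw (Lolli (Bang G) A) = (is_goal_raw G \<and> is_atom A)"
| "is_clause_raw (All D) = is_clause_raw D"
| "is_clause_raw _ = False"

definition is_goal :: "form \<Rightarrow> bool" where
  "is_goal G \<longleftrightarrow> is_goal_raw G \<and> lc_form 0 G"

definition is_clause :: "form \<Rightarrow> bool" where
  "is_clause D \<longleftrightarrow> is_clause_raw D \<and> lc_form 0 D"

definition is_program :: "form set \<Rightarrow> bool" where
  "is_program P \<longleftrightarrow> finite P \<and> (\<forall>D\<in>P. is_clause D)"

text \<open>provc P D A is prov(D;P, A) (backchaining on the distinguished clause D);
  prov P G is prov(P, G).\<close>
inductive provc :: "form set \<Rightarrow> form \<Rightarrow> form \<Rightarrow> bool"
      and prov :: "form set \<Rightarrow> form \<Rightarrow> bool" where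
  pc_atom: "provc P (Atom p ts) (Atom p ts)"
| pc_imp: "prov P G1 \<Longrightarrow> provc P (IImp G1 A) A"
| pc_all: "closed_trm t \<Longrightarrow> provc P (inst t D) A \<Longrightarrow> provc P (All D) A"
| p_atom: "D \<in> P \<Longrightarrow> provc P D (Atom p ts) \<Longrightarrow> prov P (Atom p ts)"
| p_tensor: "prov P G1 \<Longrightarrow> prov P G2 \<Longrightarrow> prov P (Tensor G1 G2)"
| p_with: "prov P G1 \<Longrightarrow> prov P G2 \<Longrightarrow> prov P (With G1 G2)"
| p_plus1: "prov P G1 \<Longrightarrow> prov P (Plus G1 G2)"
| p_plus2: "prov P G2 \<Longrightarrow> prov P (Plus G1 G2)"
| p_ex: "closed_trm t \<Longrightarrow> prov P (inst t G1) \<Longrightarrow> prov P (Ex G1)"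

text \<open>The user's choices at additive conjunctions are modelled by a choice function
  u: at a goal G0 & G1 the user picks index i = (if u (G0 & G1) then 1 else 0); the
  chosen conjunct is executed interactively, the other one is checked with prov.
  Choices at \<oplus> are made by the machine (existentially).\<close>
inductive execc :: "(form \<Rightarrow> bool) \<Rightarrow> form set \<Rightarrow> form \<Rightarrow> form \<Rightarrow> bool"
      and exec :: "(form \<Rightarrow> bool) \<Rightarrow> form set \<Rightarrow> form \<Rightarrow> bool"
  for u :: "form \<Rightarrow> bool" where
  ec_atom: "execc u P (Atom p ts) (Atom p ts)"
| ec_imp: "exec u P G1 \<Longrightarrow> execc u P (IImp G1 A) A"
| ec_all: "closed_trm t \<Longrightarrow> execc u P (inst t D) A \<Longrightarrow> execc u P (All D) A"
| e_atom: "D \<in> P \<Longrightarrow> execc u P D (Atom p ts) \<Longrightarrow> exec u P (Atom p ts)"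
| e_tensor: "exec u P G1 \<Longrightarrow> exec u P G2 \<Longrightarrow> exec u P (Tensor G1 G2)"
| e_with0: "\<not> u (With G0 G1) \<Longrightarrow> exec u P G0 \<Longrightarrow> prov P G1 \<Longrightarrow> exec u P (With G0 G1)"
| e_with1: "u (With G0 G1) \<Longrightarrow> exec u P G1 \<Longrightarrow> prov P G0 \<Longrightarrow> exec u P (With G0 G1)"
| e_plus0: "exec u P G0 \<Longrightarrow> exec u P (Plus G0 G1)"
| e_plus1: "exec u P G1 \<Longrightarrow> exec u P (Plus G0 G1)"
| e_ex: "closed_trm t \<Longrightarrow> exec u P (inst t G1) \<Longrightarrow> exec u P (Ex G1)"

definition fv_ctx :: "form multiset \<Rightarrow> nat set" where
  "fv_ctx \<Gamma> = (\<Union>F\<in>set_mset \<Gamma>. fv_form F)"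

definition all_banged :: "form multiset \<Rightarrow> bool" where
  "all_banged \<Gamma> \<longleftrightarrow> (\<forall>F\<in>#\<Gamma>. \<exists>B. F = Bang B)"

inductive ill :: "form multiset \<Rightarrow> form \<Rightarrow> bool" (infix "\<turnstile>\<^sub>L" 50) where
  identity: "{#F#} \<turnstile>\<^sub>L F"
| tensorR: "\<Gamma> \<turnstile>\<^sub>L A \<Longrightarrow> \<Delta> \<turnstile>\<^sub>L B \<Longrightarrow> \<Gamma> + \<Delta> \<turnstile>\<^sub>L Tensor A B"
| tensorL: "\<Gamma> + {#A, B#} \<turnstile>\<^sub>L C \<Longrightarrow> \<Gamma> + {#Tensor A B#} \<turnstile>\<^sub>L C"
| withR: "\<Gamma> \<turnstile>\<^sub>L A \<Longrightarrow> \<Gamma> \<turnstile>\<^sub>L B \<Longrightarrow> \<Gamma> \<turnstile>\<^sub>L With A B"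
| withL1: "\<Gamma> + {#A#} \<turnstile>\<^sub>L C \<Longrightarrow> \<Gamma> + {#With A B#} \<turnstile>\<^sub>L C"
| withL2: "\<Gamma> + {#B#} \<turnstile>\<^sub>L C \<Longrightarrow> \<Gamma> + {#With A B#} \<turnstile>\<^sub>L C"
| plusR1: "\<Gamma> \<turnstile>\<^sub>L A \<Longrightarrow> \<Gamma> \<turnstile>\<^sub>L Plus A B"
| plusR2: "\<Gamma> \<turnstile>\<^sub>L B \<Longrightarrow> \<Gamma> \<turnstile>\<^sub>L Plus A B"
| plusL: "\<Gamma> + {#A#} \<turnstile>\<^sub>L C \<Longrightarrow> \<Gamma> + {#B#} \<turnstile>\<^sub>L C \<Longrightarrow> \<Gamma> + {#Plus A B#} \<turnstile>\<^sub>L C"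
| lolliR: "\<Gamma> + {#A#} \<turnstile>\<^sub>L B \<Longrightarrow> \<Gamma> \<turnstile>\<^sub>L Lolli A B"
| lolliL: "\<Gamma> \<turnstile>\<^sub>L A \<Longrightarrow> \<Delta> + {#B#} \<turnstile>\<^sub>L C \<Longrightarrow> \<Gamma> + \<Delta> + {#Lolli A B#} \<turnstile>\<^sub>L C"
| allR: "x \<notin> fv_ctx \<Gamma> \<union> fv_form A \<Longrightarrow> \<Gamma> \<turnstile>\<^sub>L inst (Var x) A \<Longrightarrow> \<Gamma> \<turnstile>\<^sub>L All A"
| allL: "closed_trm t \<Longrightarrow> \<Gamma> + {#inst t A#} \<turnstile>\<^sub>L C \<Longrightarrow> \<Gamma> + {#All A#} \<turnstile>\<^sub>L C"
| exR: "closed_trm t \<Longrightarrow> \<Gamma> \<turnstile>\<^sub>L inst t A \<Longrightarrow> \<Gamma> \<turnstile>\<^sub>L Ex A"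
| exL: "x \<notin> fv_ctx \<Gamma> \<union> fv_form A \<union> fv_form C \<Longrightarrow> \<Gamma> + {#inst (Var x) A#} \<turnstile>\<^sub>L C
          \<Longrightarrow> \<Gamma> + {#Ex A#} \<turnstile>\<^sub>L C"
| bangR: "all_banged \<Gamma> \<Longrightarrow> \<Gamma> \<turnstile>\<^sub>L A \<Longrightarrow> \<Gamma> \<turnstile>\<^sub>L Bang A"
| dereliction: "\<Gamma> + {#A#} \<turnstile>\<^sub>L C \<Longrightarrow> \<Gamma> + {#Bang A#} \<turnstile>\<^sub>L C"
| weakening: "\<Gamma> \<turnstile>\<^sub>L C \<Longrightarrow> \<Gamma> + {#Bang A#} \<turnstile>\<^sub>L C"
| contraction: "\<Gamma> + {#Bang A, Bang A#} \<turnstile>\<^sub>L C \<Longrightarrow> \<Gamma> + {#Bang A#} \<turnstile>\<^sub>L C"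

definition bang_prog :: "form set \<Rightarrow> form multiset" where
  "bang_prog P = image_mset Bang (mset_set P)"

end

theory Submission
  imports Defs
begin

text \<open>The user's choice at a goal \<open>G\<^sub>0 & G\<^sub>1\<close> only decides which conjunct is run
  interactively; both must succeed in any case, so \<open>exec u\<close> coincides with \<open>prov\<close> for
  every choice function \<open>u\<close>. Each rule of \<open>prov\<close> is an instance of a sequent rule of
  Lolli, using contraction on the banged program whenever a clause is selected or a
  tensor splits the context; this gives soundness. For completeness, observe that in a
  cut-free derivation of \<open>!P \<turnstile> G\<close> the left-hand sides only contain (possibly banged)
  clauses and the right-hand sides only (possibly banged) goals. Interpreting a clause
  as the statement that every atom obtained by backchaining on it is provable, which
  holds for the clauses of \<open>P\<close>, an induction on the derivation shows that the
  right-hand goal is provable.\<close>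

lemma exec_imp_prov:
  shows "execc u P D A \<Longrightarrow> provc P D A"
    and "exec u P G \<Longrightarrow> prov P G"
  by (induction rule: execc_exec.inducts) (auto intro: provc_prov.intros)

lemma prov_imp_exec:
  shows "provc P D A \<Longrightarrow> execc u P D A"
    and "prov P G \<Longrightarrow> exec u P G"
proof (induction rule: provc_prov.inducts)
  case (p_with P G1 G2)
  then show ?case by (cases "u (With G1 G2)") (auto intro: e_with0 e_with1)
qed (auto intro: execc_exec.intros)

lemma exec_iff_prov: "exec u P G \<longleftrightarrow> prov P G"
  using exec_imp_prov(2) prov_imp_exec(2) by blast

lemma all_banged_bang_prog: "all_banged (bang_prog P)"
  by (auto simp: all_banged_def bang_prog_def)

lemma ill_weaken_banged:
  assumes "all_banged \<Gamma>" and "\<Delta> \<turnstile>\<^sub>L C"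
  shows "\<Gamma> + \<Delta> \<turnstile>\<^sub>L C"
  using assms
proof (induction \<Gamma>)
  case (add F \<Gamma>)
  then obtain B where "F = Bang B" by (auto simp: all_banged_def)
  moreover have "\<Gamma> + \<Delta> \<turnstile>\<^sub>L C" using add by (auto simp: all_banged_def)
  ultimately show ?case using weakening[of "\<Gamma> + \<Delta>" C B] by (simp add: ac_simps)
qed simp

lemma ill_contract_banged:
  assumes "all_banged \<Gamma>" and "\<Gamma> + \<Gamma> + \<Delta> \<turnstile>\<^sub>L C"
  shows "\<Gamma> + \<Delta> \<turnstile>\<^sub>L C"
  using assms
proof (induction \<Gamma> arbitrary: \<Delta>)
  case (add F \<Gamma>)
  then obtain B where F: "F = Bang B" by (auto simp: all_banged_def)
  have "all_banged \<Gamma>" using add.prems(1) by (simp add: all_banged_def)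
  moreover have "\<Gamma> + \<Gamma> + (\<Delta> + {#Bang B, Bang B#}) \<turnstile>\<^sub>L C"
    using add.prems(2) F by (simp add: ac_simps)
  ultimately have "\<Gamma> + (\<Delta> + {#Bang B, Bang B#}) \<turnstile>\<^sub>L C" by (rule add.IH)
  then have "(\<Gamma> + \<Delta>) + {#Bang B#} \<turnstile>\<^sub>L C" by (intro contraction) (simp add: ac_simps)
  then show ?case using F by (simp add: ac_simps)
qed simp

lemma prov_sound:
  shows "provc P D A \<Longrightarrow> finite P \<Longrightarrow> bang_prog P + {#D#} \<turnstile>\<^sub>L A"
    and "prov P G \<Longrightarrow> finite P \<Longrightarrow> bang_prog P \<turnstile>\<^sub>L G"
proof (induction rule: provc_prov.inducts)
  case (pc_atom P p ts)
  show ?case using ill_weaken_banged[OF all_banged_bang_prog identity] .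
next
  case (pc_imp P G1 A)
  have "bang_prog P \<turnstile>\<^sub>L Bang G1"
    using bangR[OF all_banged_bang_prog pc_imp.IH[OF pc_imp.prems]] .
  from lolliL[OF this, of "{#}" A A] identity[of A] show ?case by (simp add: IImp_def)
next
  case (pc_all t P D A)
  then show ?case using allL by blast
next
  case (p_atom D P p ts)
  then have "Bang D \<in># bang_prog P"
    using p_atom.prems by (simp add: bang_prog_def finite_set_mset_mset_set)
  then obtain R where R: "bang_prog P = R + {#Bang D#}" by (metis insert_DiffM2)
  have "bang_prog P + {#Bang D#} \<turnstile>\<^sub>L Atom p ts" using dereliction p_atom.IH[OF p_atom.prems] .
  then have "R + {#Bang D, Bang D#} \<turnstile>\<^sub>L Atom p ts" using R by (simp add: ac_simps)
  then show ?case using R contraction by simp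
next
  case (p_tensor P G1 G2)
  have "bang_prog P + bang_prog P + {#} \<turnstile>\<^sub>L Tensor G1 G2"
    using tensorR[OF p_tensor.IH[OF p_tensor.prems]] by simp
  from ill_contract_banged[OF all_banged_bang_prog this] show ?case by simp
qed (auto intro: withR plusR1 plusR2 exR)

lemma is_goal_raw_open_form: "is_goal_raw G \<Longrightarrow> is_goal_raw (open_form k t G)"
  by (induction G arbitrary: k) auto

lemma is_clause_raw_open_form: "is_clause_raw D \<Longrightarrow> is_clause_raw (open_form k t D)"
proof (induction D arbitrary: k)
  case (Lolli X Y)
  then show ?case by (cases X; cases Y) (auto simp: is_goal_raw_open_form)
qed auto

lemma provc_is_atom: "provc P D A \<Longrightarrow> is_clause_raw D \<Longrightarrow> is_atom A"
  by (induction rule: provc_prov.inducts(1)) (auto simp: IImp_def inst_def is_clause_raw_open_form)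

fun unbang :: "form \<Rightarrow> form" where
  "unbang (Bang F) = F"
| "unbang F = F"

lemma unbang_goal [simp]: "is_goal_raw G \<Longrightarrow> unbang G = G"
  by (cases G) auto

lemma unbang_clause [simp]: "is_clause_raw D \<Longrightarrow> unbang D = D"
  by (cases D) auto

definition clause_holds :: "form set \<Rightarrow> form \<Rightarrow> bool" where
  "clause_holds P D \<longleftrightarrow> (\<forall>A. provc P D A \<longrightarrow> prov P A)"

lemma clause_holds_program:
  assumes "D \<in> P" and "is_clause_raw D"
  shows "clause_holds P D"
  unfolding clause_holds_def
proof (intro allI impI)
  fix A assume backchain: "provc P D A"
  then have "is_atom A" using provc_is_atom assms(2) by blast
  then obtain p ts where "A = Atom p ts" by (cases A) auto
  then show "prov P A" using p_atom[OF assms(1)] backchain by simp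
qed

lemma provc_Atom_iff: "provc P (Atom p ts) A \<longleftrightarrow> A = Atom p ts"
  by (auto simp: IImp_def intro: pc_atom elim: provc.cases)

lemma clause_holds_Atom: "clause_holds P (Atom p ts) \<longleftrightarrow> prov P (Atom p ts)"
  by (simp add: clause_holds_def provc_Atom_iff)

lemma clause_holds_IImp: "clause_holds P (IImp G A) \<Longrightarrow> prov P G \<Longrightarrow> prov P A"
  by (auto simp: clause_holds_def intro: pc_imp)

lemma clause_holds_inst: "clause_holds P (All D) \<Longrightarrow> closed_trm t \<Longrightarrow> clause_holds P (inst t D)"
  by (auto simp: clause_holds_def intro: pc_all)

lemma ill_complete:
  assumes "\<Gamma> \<turnstile>\<^sub>L C"
    and "\<forall>F\<in>#\<Gamma>. is_clause_raw (unbang F) \<and> clause_holds P (unbang F)"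
    and "is_goal_raw (unbang C)"
  shows "prov P (unbang C)"
  using assms
proof (induction rule: ill.induct)
  case (identity F)
  then show ?case by (cases F) (auto simp: clause_holds_Atom elim: is_goal_raw.elims)
next
  case (lolliL \<Gamma> A \<Delta> B C)
  then obtain G where A: "A = Bang G" and G: "is_goal_raw G" and B: "is_atom B"
    and holds: "clause_holds P (IImp G B)"
    by (auto simp: IImp_def elim!: is_clause_raw.elims)
  then have "prov P G" using lolliL by simp
  then have "prov P B" using clause_holds_IImp holds by blast
  then have "is_clause_raw B \<and> clause_holds P B"
    using B by (cases B) (auto simp: clause_holds_Atom)
  then show ?case using lolliL by auto
next
  case (allL t \<Gamma> A C)
  then have "is_clause_raw (inst t A) \<and> clause_holds P (inst t A)"
    by (auto simp: inst_def is_clause_raw_open_form clause_holds_inst[unfolded inst_def])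
  then show ?case using allL by auto
next
  case (exR t \<Gamma> A)
  then show ?case by (auto simp: inst_def is_goal_raw_open_form intro: p_ex[unfolded inst_def])
qed (simp_all add: p_tensor p_with p_plus1 p_plus2)

theorem mainTheorem1:
  assumes "is_program P" and "is_goal G"
  shows "(\<forall>u. exec u P G) \<longleftrightarrow> bang_prog P \<turnstile>\<^sub>L G"
proof -
  have fin: "finite P" and clauses: "\<forall>D\<in>P. is_clause_raw D"
    using assms(1) by (auto simp: is_program_def is_clause_def)
  have goal: "is_goal_raw G" using assms(2) by (simp add: is_goal_def)
  have "\<forall>F\<in>#bang_prog P. is_clause_raw (unbang F) \<and> clause_holds P (unbang F)"
    using fin clauses clause_holds_program by (auto simp: bang_prog_def)
  then have "bang_prog P \<turnstile>\<^sub>L G \<longleftrightarrow> prov P G"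
    using ill_complete[of "bang_prog P" G P] prov_sound(2)[OF _ fin] goal by auto
  then show ?thesis by (simp add: exec_iff_prov)
qed

end
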